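(* Let $X$ be a connected vertex-transitive graph all of whose vertices have finite degree, with its path metric, and fix a vertex $x$. (i) If $\lim_{l\to\infty}\frac1l\log|B(x,l)|=0$, then $h_\infty(X)=0$. (ii) If $\limsup_{l\to\infty}\frac1l\log|B(x,l)|>0$, then $h_\infty(X)=\infty$.
   Context: A graph is vertex-transitive if for any two vertices $v,v'$ there is a graph automorphism mapping $v$ to $v'$. The path metric is the minimal number of edges of a path between two vertices; $B(x,l)$ is the closed ball. Coarse entropy $h_\infty(X)=\lim_{\delta\to\infty}\lim_{R\to\infty}\limsup_{n\to\infty}\frac1n\log s(n,R,\delta,x_0)$, where $s(n,R,\delta,x_0)$ is the supremum of cardinalities of $R$-separated sets of $\delta$-paths $(x_0,\dots,x_n)$ ($d(x_i,x_{i+1})\le\delta$) starting at $x_0$, paths compared by $\max_i d(x_i,y_i)$. *)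

theory Defs
  imports "HOL-Analysis.Analysis" "HOL-Library.Liminf_Limsup"
begin

definition walk :: "('a \<Rightarrow> 'a \<Rightarrow> bool) \<Rightarrow> (nat \<Rightarrow> 'a) \<Rightarrow> nat \<Rightarrow> bool" where
  "walk E p n \<longleftrightarrow> (\<forall>i<n. E (p i) (p (Suc i)))"

definition graph_connected :: "('a \<Rightarrow> 'a \<Rightarrow> bool) \<Rightarrow> bool" where
  "graph_connected E \<longleftrightarrow> (\<forall>x y. \<exists>p n. p 0 = x \<and> p n = y \<and> walk E p n)"

definition locally_finite :: "('a \<Rightarrow> 'a \<Rightarrow> bool) \<Rightarrow> bool" where
  "locally_finite E \<longleftrightarrow> (\<forall>x. finite {y. E x y})"

definition graph_automorphism :: "('a \<Rightarrow> 'a \<Rightarrow> bool) \<Rightarrow> ('a \<Rightarrow> 'a) \<Rightarrow> bool" where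
  "graph_automorphism E \<sigma> \<longleftrightarrow> bij \<sigma> \<and> (\<forall>a b. E a b \<longleftrightarrow> E (\<sigma> a) (\<sigma> b))"

definition vertex_transitive :: "('a \<Rightarrow> 'a \<Rightarrow> bool) \<Rightarrow> bool" where
  "vertex_transitive E \<longleftrightarrow> (\<forall>v v'. \<exists>\<sigma>. graph_automorphism E \<sigma> \<and> \<sigma> v = v')"

definition gdist :: "('a \<Rightarrow> 'a \<Rightarrow> bool) \<Rightarrow> 'a \<Rightarrow> 'a \<Rightarrow> nat" where
  "gdist E x y = (LEAST n. \<exists>p. p 0 = x \<and> p n = y \<and> walk E p n)"

definition gball :: "('a \<Rightarrow> 'a \<Rightarrow> bool) \<Rightarrow> 'a \<Rightarrow> nat \<Rightarrow> 'a set" where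
  "gball E x l = {y. gdist E x y \<le> l}"

definition delta_paths :: "('a \<Rightarrow> 'a \<Rightarrow> bool) \<Rightarrow> nat \<Rightarrow> real \<Rightarrow> 'a \<Rightarrow> 'a list set" where
  "delta_paths E n \<delta> x0 = {p. length p = Suc n \<and> p ! 0 = x0 \<and>
       (\<forall>i<n. real (gdist E (p ! i) (p ! Suc i)) \<le> \<delta>)}"

definition path_dist :: "('a \<Rightarrow> 'a \<Rightarrow> bool) \<Rightarrow> 'a list \<Rightarrow> 'a list \<Rightarrow> real" where
  "path_dist E p q = Max {real (gdist E (p ! i) (q ! i)) | i. i < length p}"

definition separated :: "('a \<Rightarrow> 'a \<Rightarrow> bool) \<Rightarrow> real \<Rightarrow> 'a list set \<Rightarrow> bool" where
  "separated E R S \<longleftrightarrow> (\<forall>p\<in>S. \<forall>q\<in>S. p \<noteq> q \<longrightarrow> path_dist E p q > R)"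

text \<open>s(n,R,delta,x0): supremum of cardinalities of R-separated sets of delta-paths
  (sup over finite such sets, which equals the sup over all such sets).\<close>
definition sep_count :: "('a \<Rightarrow> 'a \<Rightarrow> bool) \<Rightarrow> nat \<Rightarrow> real \<Rightarrow> real \<Rightarrow> 'a \<Rightarrow> ereal" where
  "sep_count E n R \<delta> x0 = Sup {ereal (real (card S)) | S.
      finite S \<and> S \<subseteq> delta_paths E n \<delta> x0 \<and> separated E R S}"

definition growth_term :: "('a \<Rightarrow> 'a \<Rightarrow> bool) \<Rightarrow> nat \<Rightarrow> real \<Rightarrow> real \<Rightarrow> 'a \<Rightarrow> ereal" where
  "growth_term E n R \<delta> x0 =
     (let s = sep_count E n R \<delta> x0 in
      if s = \<infinity> then \<infinity> else ereal (ln (real_of_ereal s) / real n))"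

definition coarse_entropy :: "('a \<Rightarrow> 'a \<Rightarrow> bool) \<Rightarrow> 'a \<Rightarrow> ereal" where
  "coarse_entropy E x0 =
     Lim at_top (\<lambda>\<delta>::real. Lim at_top (\<lambda>R::real.
        limsup (\<lambda>n. growth_term E n R \<delta> x0)))"

end

theory Submission
  imports Defs
begin

text \<open>
  Upper bound: sampling a \<delta>-path at every k-th step, with k about R/(2\<delta>), gives a chain of
  n/k jumps of length at most k\<delta>, and two R-separated paths cannot have the same samples.
  Hence s(n,R,\<delta>) \<le> |B(K)|^(n/k) with K about k\<delta>, so the inner limsup is at most
  \<delta> log |B(K)| / K, and K tends to infinity with R.

  Lower bound: by vertex-transitivity every ball B(y,kd) contains an r-separated set of at
  least |B(kd)| / |B(r)| points. Following geodesics to these points in steps of length d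
  and branching again at every endpoint yields (|B(kd)| / |B(r)|)^j pairwise r-separated
  d-paths of length jk, so the inner limsup is at least log (|B(kd)| / |B(r)|) / k. If
  log |B(l)| / l > c for infinitely many l, choosing kd close to such an l bounds this from
  below by c d / 4 uniformly in R, which tends to infinity with \<delta>.
\<close>

lemma antimono_tendsto_INF_at_top:
  fixes g :: "real \<Rightarrow> 'b::{complete_linorder, linorder_topology}"
  assumes "antimono g"
  shows "(g \<longlongrightarrow> (INF R. g R)) at_top"
proof (rule decreasing_tendsto)
  show "\<forall>\<^sub>F R in at_top. (INF R. g R) \<le> g R" by (simp add: INF_lower)
next
  fix a assume "(INF R. g R) < a"
  then obtain R0 where R0: "g R0 < a" by (auto simp: INF_less_iff)
  have "g R < a" if "R \<ge> R0" for R using assms R0 that unfolding antimono_def by (meson le_less_trans)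
  then show "\<forall>\<^sub>F R in at_top. g R < a" unfolding eventually_at_top_linorder by blast
qed

locale connected_lf_graph =
  fixes E :: "'a \<Rightarrow> 'a \<Rightarrow> bool"
  assumes sym: "\<And>a b. E a b \<longleftrightarrow> E b a"
    and conn: "graph_connected E"
    and lf: "locally_finite E"
begin

lemma gdist_attained: "\<exists>p. p 0 = x \<and> p (gdist E x y) = y \<and> walk E p (gdist E x y)"
proof -
  from conn have "\<exists>n p. p 0 = x \<and> p n = y \<and> walk E p n"
    unfolding graph_connected_def by blast
  from LeastI_ex[OF this] show ?thesis unfolding gdist_def by blast
qed

lemma gdist_le_walk: "p 0 = x \<Longrightarrow> p n = y \<Longrightarrow> walk E p n \<Longrightarrow> gdist E x y \<le> n"
  unfolding gdist_def by (rule Least_le) blast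

lemma gdist_self [simp]: "gdist E x x = 0"
  using gdist_le_walk[of "\<lambda>i. x" x 0 x] by (simp add: walk_def)

lemma gdist_eq_0D: "gdist E a b = 0 \<Longrightarrow> a = b"
  using gdist_attained[of a b] by auto

lemma gdist_walk_le:
  assumes "walk E p n" "a \<le> b" "b \<le> n"
  shows "gdist E (p a) (p b) \<le> b - a"
proof (rule gdist_le_walk[of "\<lambda>i. p (a + i)"])
  show "walk E (\<lambda>i. p (a + i)) (b - a)" using assms unfolding walk_def by auto
qed (use assms in auto)

lemma gdist_commute: "gdist E x y = gdist E y x"
proof -
  have reverse: "gdist E b a \<le> gdist E a b" for a b
  proof -
    define n where "n = gdist E a b"
    obtain p where p: "p 0 = a" "p n = b" "walk E p n"
      using gdist_attained unfolding n_def by blast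
    have "walk E (\<lambda>i. p (n - i)) n"
      unfolding walk_def
    proof (intro allI impI)
      fix i assume i: "i < n"
      then have "E (p (n - Suc i)) (p (Suc (n - Suc i)))" using p(3) unfolding walk_def by auto
      moreover have "n - i = Suc (n - Suc i)" using i by simp
      ultimately show "E (p (n - i)) (p (n - Suc i))" using sym by simp
    qed
    then show ?thesis using gdist_le_walk[of "\<lambda>i. p (n - i)" b n a] p unfolding n_def by simp
  qed
  show ?thesis using reverse[of x y] reverse[of y x] by simp
qed

lemma gdist_triangle: "gdist E x z \<le> gdist E x y + gdist E y z"
proof -
  define n m where "n = gdist E x y" and "m = gdist E y z"
  obtain p where p: "p 0 = x" "p n = y" "walk E p n"
    using gdist_attained unfolding n_def by blast
  obtain q where q: "q 0 = y" "q m = z" "walk E q m"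
    using gdist_attained unfolding m_def by blast
  define pq where "pq = (\<lambda>i. if i \<le> n then p i else q (i - n))"
  have "walk E pq (n + m)" unfolding walk_def
  proof (intro allI impI)
    fix i assume i: "i < n + m"
    show "E (pq i) (pq (Suc i))"
    proof (cases "i < n")
      case True then show ?thesis using p(3) unfolding pq_def walk_def by auto
    next
      case False
      then have "Suc i - n = Suc (i - n)" "i - n < m" using i by simp_all
      then show ?thesis using q False p(2) unfolding pq_def walk_def
        by (cases "i = n") auto
    qed
  qed
  moreover have "pq 0 = x" "pq (n + m) = z" using p q unfolding pq_def
    by (auto simp: not_le)
  ultimately show ?thesis using gdist_le_walk[of pq x "n + m" z] unfolding n_def m_def by simp
qed

lemma center_in_gball: "x \<in> gball E x l"
  unfolding gball_def by simp

lemma finite_gball: "finite (gball E x l)"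
proof (induction l)
  case 0
  have "gball E x 0 = {x}" unfolding gball_def using gdist_eq_0D by auto
  then show ?case by simp
next
  case (Suc l)
  have "gball E x (Suc l) \<subseteq> gball E x l \<union> (\<Union>y\<in>gball E x l. {z. E y z})"
  proof
    fix z assume z: "z \<in> gball E x (Suc l)"
    show "z \<in> gball E x l \<union> (\<Union>y\<in>gball E x l. {z. E y z})"
    proof (cases "gdist E x z \<le> l")
      case True then show ?thesis unfolding gball_def by auto
    next
      case False
      then have g: "gdist E x z = Suc l" using z unfolding gball_def by auto
      obtain p where p: "p 0 = x" "p (Suc l) = z" "walk E p (Suc l)"
        using gdist_attained g by metis
      have "gdist E (p 0) (p l) \<le> l" using gdist_walk_le[OF p(3), of 0 l] by simp
      moreover have "E (p l) (p (Suc l))" using p(3) unfolding walk_def by auto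
      ultimately show ?thesis using p unfolding gball_def by auto
    qed
  qed
  moreover have "finite (\<Union>y\<in>gball E x l. {z. E y z})"
    using Suc lf unfolding locally_finite_def by auto
  ultimately show ?case using Suc by (meson finite_Un finite_subset)
qed

lemma card_gball_ge_1: "card (gball E x l) \<ge> 1"
  using finite_gball center_in_gball by (metis One_nat_def Suc_leI card_gt_0_iff empty_iff)

lemma card_gball_mono: "l \<le> l' \<Longrightarrow> card (gball E x l) \<le> card (gball E x l')"
  by (rule card_mono[OF finite_gball]) (auto simp: gball_def)

lemma gdist_automorphism:
  assumes "graph_automorphism E \<sigma>"
  shows "gdist E (\<sigma> a) (\<sigma> b) = gdist E a b"
proof -
  have b: "bij \<sigma>" and e: "\<And>a b. E a b \<longleftrightarrow> E (\<sigma> a) (\<sigma> b)"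
    using assms unfolding graph_automorphism_def by auto
  have image_le: "gdist E (f a) (f b) \<le> gdist E a b" if "\<And>a b. E a b \<Longrightarrow> E (f a) (f b)"
    for f and a b
  proof -
    obtain p where p: "p 0 = a" "p (gdist E a b) = b" "walk E p (gdist E a b)"
      using gdist_attained by blast
    have "walk E (f \<circ> p) (gdist E a b)" using p(3) that unfolding walk_def by simp
    then show ?thesis using gdist_le_walk[of "f \<circ> p"] p by auto
  qed
  have "E a b \<Longrightarrow> E (inv \<sigma> a) (inv \<sigma> b)" for a b
    using e b by (metis bij_inv_eq_iff)
  then have "gdist E (inv \<sigma> (\<sigma> a)) (inv \<sigma> (\<sigma> b)) \<le> gdist E (\<sigma> a) (\<sigma> b)"
    by (rule image_le)
  moreover have "gdist E (\<sigma> a) (\<sigma> b) \<le> gdist E a b" using e by (intro image_le) simp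
  ultimately show ?thesis using b by (simp add: bij_is_inj)
qed

lemma gdist_delta_path_le:
  assumes p: "p \<in> delta_paths E n \<delta> x0" and ab: "a \<le> b" "b \<le> n"
  shows "real (gdist E (p!a) (p!b)) \<le> real (b - a) * \<delta>"
  using ab
proof (induction b)
  case 0 then show ?case by simp
next
  case (Suc b)
  show ?case
  proof (cases "a = Suc b")
    case True then show ?thesis by simp
  next
    case False
    then have ab: "a \<le> b" "b < n" using Suc by auto
    have "gdist E (p!a) (p!Suc b) \<le> gdist E (p!a) (p!b) + gdist E (p!b) (p!Suc b)"
      by (rule gdist_triangle)
    moreover have "real (gdist E (p!a) (p!b)) \<le> real (b - a) * \<delta>" using Suc ab by auto
    moreover have "real (gdist E (p!b) (p!Suc b)) \<le> \<delta>"
      using p ab unfolding delta_paths_def by auto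
    ultimately have "real (gdist E (p!a) (p!Suc b)) \<le> real (b - a) * \<delta> + \<delta>" by linarith
    also have "\<dots> = real (Suc b - a) * \<delta>" using ab by (simp add: Suc_diff_le algebra_simps)
    finally show ?thesis .
  qed
qed

lemma sep_count_ge_1: assumes "\<delta> \<ge> 0" shows "sep_count E n R \<delta> x0 \<ge> 1"
proof -
  let ?p = "replicate (Suc n) x0"
  have "?p \<in> delta_paths E n \<delta> x0"
    using assms unfolding delta_paths_def by (auto simp del: replicate.simps)
  then have "ereal (real (card {?p})) \<le> sep_count E n R \<delta> x0"
    unfolding sep_count_def separated_def by (intro Sup_upper) blast
  then show ?thesis by (simp add: one_ereal_def)
qed

lemma sep_count_antimono:
  assumes "R \<le> R'" shows "sep_count E n R' \<delta> x0 \<le> sep_count E n R \<delta> x0"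
  unfolding sep_count_def
proof (rule Sup_subset_mono, rule subsetI)
  fix y
  assume "y \<in> {ereal (real (card S)) | S. finite S \<and> S \<subseteq> delta_paths E n \<delta> x0 \<and> separated E R' S}"
  moreover have "separated E R' S \<Longrightarrow> separated E R S" for S
    using assms unfolding separated_def by fastforce
  ultimately show "y \<in> {ereal (real (card S)) | S. finite S \<and> S \<subseteq> delta_paths E n \<delta> x0 \<and> separated E R S}"
    by blast
qed

lemma growth_term_finite:
  assumes "\<delta> \<ge> 0" "sep_count E n R \<delta> x0 \<noteq> \<infinity>"
  obtains s where "sep_count E n R \<delta> x0 = ereal s" "s \<ge> 1"
    "growth_term E n R \<delta> x0 = ereal (ln s / real n)"
  using assms sep_count_ge_1[OF assms(1), of n R x0]
  by (cases "sep_count E n R \<delta> x0") (auto simp: growth_term_def)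

lemma growth_term_nonneg: assumes "\<delta> \<ge> 0" shows "growth_term E n R \<delta> x0 \<ge> 0"
proof (cases "sep_count E n R \<delta> x0 = \<infinity>")
  case True then show ?thesis unfolding growth_term_def by simp
next
  case False
  with assms show ?thesis by (rule growth_term_finite) simp
qed

lemma growth_term_le:
  assumes "\<delta> \<ge> 0" and "sep_count E n R \<delta> x0 \<le> ereal B"
  shows "growth_term E n R \<delta> x0 \<le> ereal (ln B / real n)"
proof -
  have "sep_count E n R \<delta> x0 \<noteq> \<infinity>" using assms(2) by auto
  with assms(1) obtain s where s: "sep_count E n R \<delta> x0 = ereal s" "s \<ge> 1"
    "growth_term E n R \<delta> x0 = ereal (ln s / real n)"
    by (rule growth_term_finite)
  then have "ln s \<le> ln B" using assms(2) by simp
  then show ?thesis using s by (simp add: divide_right_mono)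
qed

lemma growth_term_ge:
  assumes "\<delta> \<ge> 0" and "sep_count E n R \<delta> x0 \<ge> ereal B" and "B > 0"
  shows "growth_term E n R \<delta> x0 \<ge> ereal (ln B / real n)"
proof (cases "sep_count E n R \<delta> x0 = \<infinity>")
  case True then show ?thesis unfolding growth_term_def by simp
next
  case False
  with assms(1) obtain s where s: "sep_count E n R \<delta> x0 = ereal s"
    "growth_term E n R \<delta> x0 = ereal (ln s / real n)"
    by (rule growth_term_finite)
  then have "ln B \<le> ln s" using assms(2,3) by simp
  then show ?thesis using s by (simp add: divide_right_mono)
qed

lemma growth_term_antimono:
  assumes "\<delta> \<ge> 0" and "R \<le> R'"
  shows "growth_term E n R' \<delta> x0 \<le> growth_term E n R \<delta> x0"
proof (cases "sep_count E n R \<delta> x0 = \<infinity>")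
  case True then show ?thesis unfolding growth_term_def by simp
next
  case False
  with assms(1) obtain s where "sep_count E n R \<delta> x0 = ereal s"
    "growth_term E n R \<delta> x0 = ereal (ln s / real n)"
    by (rule growth_term_finite)
  then show ?thesis
    using growth_term_le[OF assms(1)] sep_count_antimono[OF assms(2)] by metis
qed

lemma path_dist_le_if_samples_agree:
  assumes p: "p \<in> delta_paths E n \<delta> x0" and q: "q \<in> delta_paths E n \<delta> x0"
    and k: "k \<ge> 1" and \<delta>: "\<delta> \<ge> 0" and R: "2 * real (k - 1) * \<delta> \<le> R"
    and agree: "\<And>c. c * k \<le> n \<Longrightarrow> p ! (c * k) = q ! (c * k)"
  shows "path_dist E p q \<le> R"
proof -
  have "real (gdist E (p!i) (q!i)) \<le> R" if i: "i \<le> n" for i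
  proof -
    define c where "c = i div k"
    have ck: "c * k \<le> i" unfolding c_def by (simp add: div_times_less_eq_dividend)
    have "i - c * k = i mod k" unfolding c_def by (simp add: minus_div_mult_eq_mod)
    moreover have "i mod k < k" using k by simp
    ultimately have offset: "i - c * k \<le> k - 1" by linarith
    have "gdist E (p!i) (q!i) \<le> gdist E (p!i) (p!(c*k)) + gdist E (p!(c*k)) (q!i)"
      by (rule gdist_triangle)
    then have "real (gdist E (p!i) (q!i))
        \<le> real (gdist E (p!(c*k)) (p!i)) + real (gdist E (q!(c*k)) (q!i))"
      using agree[of c] ck i gdist_commute by (metis le_trans of_nat_add of_nat_mono)
    also have "\<dots> \<le> 2 * (real (i - c*k) * \<delta>)"
      using gdist_delta_path_le[OF p ck i] gdist_delta_path_le[OF q ck i] by linarith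
    also have "\<dots> \<le> 2 * (real (k - 1) * \<delta>)" using offset \<delta> by (simp add: mult_right_mono)
    finally show ?thesis using R by linarith
  qed
  moreover have "length p = Suc n" using p unfolding delta_paths_def by auto
  ultimately show ?thesis unfolding path_dist_def by (subst Max_le_iff) auto
qed

definition sample_chains :: "'a \<Rightarrow> nat \<Rightarrow> nat \<Rightarrow> (nat \<Rightarrow> 'a) set" where
  "sample_chains x K j = {t. t 0 = x \<and> (\<forall>i<j. gdist E (t i) (t (Suc i)) \<le> K) \<and> (\<forall>i>j. t i = x)}"

definition vertex_separated :: "nat \<Rightarrow> 'a set \<Rightarrow> bool" where
  "vertex_separated r T \<longleftrightarrow> (\<forall>a\<in>T. \<forall>b\<in>T. a \<noteq> b \<longrightarrow> r < gdist E a b)"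

definition walks_separated :: "nat \<Rightarrow> nat \<Rightarrow> (nat \<Rightarrow> 'a) set \<Rightarrow> bool" where
  "walks_separated n r F \<longleftrightarrow> (\<forall>f\<in>F. \<forall>g\<in>F. f \<noteq> g \<longrightarrow> (\<exists>i\<le>n. r < gdist E (f i) (g i)))"

lemma sep_count_ge_card:
  assumes F: "finite F" "walks_separated n r F" and R: "R \<le> real r"
    and start: "\<And>f. f \<in> F \<Longrightarrow> f 0 = x"
    and step: "\<And>f i. f \<in> F \<Longrightarrow> i < n \<Longrightarrow> real (gdist E (f i) (f (Suc i))) \<le> \<delta>"
  shows "ereal (real (card F)) \<le> sep_count E n R \<delta> x"
proof -
  define to_list where "to_list f = map f [0..<Suc n]" for f :: "nat \<Rightarrow> 'a"
  have nth_to_list: "to_list f ! i = f i" if "i \<le> n" for f i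
    using that unfolding to_list_def by (simp del: upt_Suc add: nth_append)
  have far: "\<exists>i\<le>n. R < real (gdist E (f i) (g i))" if "f \<in> F" "g \<in> F" "f \<noteq> g" for f g
    using F(2) R that unfolding walks_separated_def by fastforce
  have "inj_on to_list F"
  proof (rule inj_onI, rule ccontr)
    fix f g assume "f \<in> F" "g \<in> F" and eq: "to_list f = to_list g" and "f \<noteq> g"
    then obtain i where "i \<le> n" "r < gdist E (f i) (g i)"
      using F(2) unfolding walks_separated_def by blast
    moreover from this have "f i = g i" using eq nth_to_list by metis
    ultimately show False by simp
  qed
  moreover have "to_list ` F \<subseteq> delta_paths E n \<delta> x"
    using start step nth_to_list unfolding delta_paths_def to_list_def by (auto simp del: upt_Suc)
  moreover have "separated E R (to_list ` F)"
    unfolding separated_def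
  proof (intro ballI impI)
    fix p q assume "p \<in> to_list ` F" "q \<in> to_list ` F" "p \<noteq> q"
    then obtain f g where fg: "f \<in> F" "g \<in> F" "f \<noteq> g" "p = to_list f" "q = to_list g" by auto
    then obtain i where i: "i \<le> n" "R < real (gdist E (f i) (g i))" using far by blast
    have "real (gdist E (p!i) (q!i)) \<le> path_dist E p q"
      unfolding path_dist_def using i fg by (intro Max_ge) (auto simp: to_list_def)
    then show "R < path_dist E p q" using i fg nth_to_list by simp
  qed
  moreover have "finite (to_list ` F)" using F(1) by simp
  ultimately show ?thesis
    unfolding sep_count_def by (intro Sup_upper) (metis (mono_tags, lifting) card_image mem_Collect_eq)
qed

definition geodesic :: "'a \<Rightarrow> 'a \<Rightarrow> nat \<Rightarrow> 'a" where
  "geodesic y z = (SOME p. p 0 = y \<and> p (gdist E y z) = z \<and> walk E p (gdist E y z))"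

lemma geodesic: "geodesic y z 0 = y" "geodesic y z (gdist E y z) = z"
  "walk E (geodesic y z) (gdist E y z)"
  using someI_ex[OF gdist_attained[of y z]] unfolding geodesic_def by auto

definition extend_walk :: "nat \<Rightarrow> nat \<Rightarrow> (nat \<Rightarrow> 'a) \<Rightarrow> 'a \<Rightarrow> nat \<Rightarrow> 'a" where
  "extend_walk d m f z i =
     (if i \<le> m then f i else geodesic (f m) z (min ((i - m) * d) (gdist E (f m) z)))"

lemma extend_walk_ge:
  "m \<le> i \<Longrightarrow> extend_walk d m f z i = geodesic (f m) z (min ((i - m) * d) (gdist E (f m) z))"
  unfolding extend_walk_def using geodesic(1) by auto

lemma extend_walk_end:
  assumes "gdist E (f m) z \<le> k * d" "m + k \<le> i"
  shows "extend_walk d m f z i = z"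
proof -
  have "k * d \<le> (i - m) * d" using assms(2) by (intro mult_le_mono1) simp
  then have "gdist E (f m) z \<le> (i - m) * d" using assms(1) by linarith
  moreover have "m \<le> i" using assms(2) by simp
  ultimately show ?thesis by (simp add: extend_walk_ge min_absorb2 geodesic(2))
qed

lemma extend_walk_step:
  assumes "m \<le> i"
  shows "gdist E (extend_walk d m f z i) (extend_walk d m f z (Suc i)) \<le> d"
proof -
  let ?t = "\<lambda>j. min ((j - m) * d) (gdist E (f m) z)"
  have "gdist E (geodesic (f m) z (?t i)) (geodesic (f m) z (?t (Suc i))) \<le> ?t (Suc i) - ?t i"
    using assms by (intro gdist_walk_le[OF geodesic(3)]) (auto simp: Suc_diff_le)
  also have "\<dots> \<le> d" using assms by (auto simp: Suc_diff_le)
  finally show ?thesis using assms by (simp add: extend_walk_ge)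
qed

primrec branching_walks :: "('a \<Rightarrow> 'a set) \<Rightarrow> nat \<Rightarrow> nat \<Rightarrow> 'a \<Rightarrow> nat \<Rightarrow> (nat \<Rightarrow> 'a) set" where
  "branching_walks T d k x 0 = {\<lambda>i. x}"
| "branching_walks T d k x (Suc j) = (\<lambda>(f, z). extend_walk d (j * k) f z)
      ` Sigma (branching_walks T d k x j) (\<lambda>f. T (f (j * k)))"

lemma branching_walks_start_step:
  assumes "f \<in> branching_walks T d k x j"
  shows "f 0 = x \<and> (\<forall>i<j * k. gdist E (f i) (f (Suc i)) \<le> d)"
  using assms
proof (induction j arbitrary: f)
  case (Suc j)
  then obtain g z where g: "g \<in> branching_walks T d k x j" and f: "f = extend_walk d (j * k) g z"
    by auto
  have "gdist E (f i) (f (Suc i)) \<le> d" if "i < Suc j * k" for i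
  proof (cases "i < j * k")
    case True then show ?thesis using Suc.IH[OF g] unfolding f extend_walk_def by simp
  next
    case False then show ?thesis unfolding f by (intro extend_walk_step) simp
  qed
  then show ?case using Suc.IH[OF g] unfolding f extend_walk_def by simp
qed simp

lemma branching_walks_separated:
  assumes T: "\<And>y. T y \<subseteq> gball E y (k * d)" "\<And>y. vertex_separated r (T y)"
  shows "walks_separated (j * k) r (branching_walks T d k x j)"
proof (induction j)
  case 0 then show ?case unfolding walks_separated_def by simp
next
  case (Suc j)
  have last: "extend_walk d (j * k) f z (Suc j * k) = z" if "z \<in> T (f (j * k))" for f z
    using that T(1) by (intro extend_walk_end[of f "j * k" z k d]) (auto simp: gball_def)
  show ?case unfolding walks_separated_def
  proof (intro ballI impI)
    fix h h' assume "h \<in> branching_walks T d k x (Suc j)" "h' \<in> branching_walks T d k x (Suc j)"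
      and ne: "h \<noteq> h'"
    then obtain f z f' z' where f: "f \<in> branching_walks T d k x j" "z \<in> T (f (j * k))"
      and f': "f' \<in> branching_walks T d k x j" "z' \<in> T (f' (j * k))"
      and h: "h = extend_walk d (j * k) f z" "h' = extend_walk d (j * k) f' z'"
      by auto
    show "\<exists>i\<le>Suc j * k. r < gdist E (h i) (h' i)"
    proof (cases "f = f'")
      case False
      then obtain i where i: "i \<le> j * k" "r < gdist E (f i) (f' i)"
        using Suc f f' unfolding walks_separated_def by blast
      then have "h i = f i" "h' i = f' i" "i \<le> Suc j * k"
        using h by (simp_all add: extend_walk_def)
      then show ?thesis using i by (intro exI[of _ i]) simp
    next
      case True
      then have "z \<noteq> z'" using ne h by auto
      then have "r < gdist E z z'"
        using f(2) f'(2) True T(2) unfolding vertex_separated_def by blast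
      moreover have "h (Suc j * k) = z" "h' (Suc j * k) = z'"
        using last f(2) f'(2) h by simp_all
      ultimately show ?thesis by (intro exI[of _ "Suc j * k"]) simp
    qed
  qed
qed

lemma branching_walks_card:
  assumes T: "\<And>y. T y \<subseteq> gball E y (k * d)" "\<And>y. vertex_separated r (T y)"
    and M: "\<And>y. real (card (T y)) \<ge> M" "M \<ge> 0"
  shows "finite (branching_walks T d k x j) \<and> real (card (branching_walks T d k x j)) \<ge> M ^ j"
proof (induction j)
  case 0 then show ?case by simp
next
  case (Suc j)
  let ?F = "branching_walks T d k x j"
  let ?S = "Sigma ?F (\<lambda>f. T (f (j * k)))"
  have finite_T: "finite (T y)" for y using T(1) finite_gball finite_subset by metis
  have last: "extend_walk d (j * k) f z (Suc j * k) = z" if "z \<in> T (f (j * k))" for f z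
    using that T(1) by (intro extend_walk_end[of f "j * k" z k d]) (auto simp: gball_def)
  have "inj_on (\<lambda>(f, z). extend_walk d (j * k) f z) ?S"
  proof (rule inj_onI, clarify)
    fix f z g w assume f: "f \<in> ?F" "z \<in> T (f (j * k))" and g: "g \<in> ?F" "w \<in> T (g (j * k))"
      and eq: "extend_walk d (j * k) f z = extend_walk d (j * k) g w"
    have "f = g"
    proof (rule ccontr)
      assume "f \<noteq> g"
      then obtain i where i: "i \<le> j * k" "r < gdist E (f i) (g i)"
        using branching_walks_separated[OF T, of j x] f(1) g(1)
        unfolding walks_separated_def by blast
      moreover have "f i = g i"
        using fun_cong[OF eq, of i] i(1) unfolding extend_walk_def by simp
      ultimately show False by simp
    qed
    moreover have "z = w" using fun_cong[OF eq, of "Suc j * k"] last f(2) g(2) by simp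
    ultimately show "f = g \<and> z = w" by simp
  qed
  then have "real (card (branching_walks T d k x (Suc j))) = real (card ?S)"
    by (simp add: card_image)
  also have "\<dots> = (\<Sum>f\<in>?F. real (card (T (f (j * k)))))" using Suc finite_T by simp
  also have "\<dots> \<ge> (\<Sum>f\<in>?F. M)" using M(1) by (intro sum_mono)
  finally have "real (card (branching_walks T d k x (Suc j))) \<ge> real (card ?F) * M" by simp
  moreover have "real (card ?F) * M \<ge> M ^ j * M" using Suc M(2) by (intro mult_right_mono) simp_all
  ultimately show ?case using Suc finite_T by (simp add: mult.commute)
qed

lemma exists_scale_large_ball_ratio:
  assumes c: "c > 0" and d: "d \<ge> 1"
    and freq: "frequently (\<lambda>l. c < ln (real (card (gball E x l))) / real l) sequentially"
  shows "\<exists>k\<ge>1. c * real d / 4 \<le>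
    ln (real (card (gball E x (k * d))) / real (card (gball E x r))) / real k"
proof -
  define b where "b = real (card (gball E x r))"
  have b: "b \<ge> 1" unfolding b_def using card_gball_ge_1 by simp
  obtain l where l: "l \<ge> d + nat \<lceil>2 * ln b / c\<rceil>"
    and growth: "c < ln (real (card (gball E x l))) / real l"
    using freq unfolding frequently_sequentially by blast
  have "real l > 0" using l d by simp
  then have growth': "c * real l < ln (real (card (gball E x l)))" using growth by (simp add: field_simps)
  have "real l \<ge> 2 * ln b / c" using l by linarith
  then have ln_b: "ln b \<le> c * real l / 2" using c by (simp add: field_simps)
  define k where "k = l div d + 1"
  have "l = l div d * d + l mod d" "l mod d < d" "k * d = l div d * d + d"
    using d unfolding k_def by (simp_all add: algebra_simps)
  then have kd: "l \<le> k * d" "k * d \<le> 2 * l" using l by linarith+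
  have "c * real l / 2 < ln (real (card (gball E x l))) - ln b" using growth' ln_b by linarith
  also have "\<dots> \<le> ln (real (card (gball E x (k * d))) / b)"
    using card_gball_mono[OF kd(1), of x] card_gball_ge_1[of x l] b by (simp add: ln_div)
  finally have ratio: "c * real l / 2 < ln (real (card (gball E x (k * d))) / b)" .
  have "c * real d / 4 * real k = c * real (k * d) / 4" by simp
  also have "\<dots> \<le> c * real (2 * l) / 4"
    using of_nat_mono[OF kd(2)] c by (intro divide_right_mono mult_left_mono) simp_all
  also have "\<dots> = c * real l / 2" by simp
  finally have "c * real d / 4 \<le> ln (real (card (gball E x (k * d))) / b) / real k"
    using ratio unfolding k_def by (simp add: field_simps)
  then show ?thesis unfolding b_def k_def by (intro exI[of _ "l div d + 1"]) simp
qed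

end

locale vertex_transitive_graph = connected_lf_graph +
  assumes vt: "vertex_transitive E"
begin

lemma card_gball_eq: "card (gball E y l) = card (gball E x l)"
proof -
  obtain \<sigma> where \<sigma>: "graph_automorphism E \<sigma>" "\<sigma> x = y"
    using vt unfolding vertex_transitive_def by blast
  have b: "bij \<sigma>" using \<sigma> unfolding graph_automorphism_def by auto
  have "\<sigma> ` gball E x l = gball E y l"
  proof
    show "\<sigma> ` gball E x l \<subseteq> gball E y l"
      using gdist_automorphism[OF \<sigma>(1)] \<sigma>(2) unfolding gball_def by auto
    show "gball E y l \<subseteq> \<sigma> ` gball E x l"
    proof
      fix z assume "z \<in> gball E y l"
      then have "inv \<sigma> z \<in> gball E x l"
        using gdist_automorphism[OF \<sigma>(1), of x "inv \<sigma> z"] \<sigma>(2) b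
        unfolding gball_def by (simp add: bij_is_surj surj_f_inv_f)
      then show "z \<in> \<sigma> ` gball E x l" using b by (metis bij_inv_eq_iff image_eqI)
    qed
  qed
  then show ?thesis using b by (metis bij_is_inj card_image inj_on_subset subset_UNIV)
qed

lemma sample_chains_finite_card_le:
  "finite (sample_chains x K j) \<and> card (sample_chains x K j) \<le> card (gball E x K) ^ j"
proof (induction j)
  case 0
  have "sample_chains x K 0 = {\<lambda>i. x}"
  proof
    show "sample_chains x K 0 \<subseteq> {\<lambda>i. x}"
    proof
      fix t assume "t \<in> sample_chains x K 0"
      then have "t i = x" for i unfolding sample_chains_def by (cases i) auto
      then show "t \<in> {\<lambda>i. x}" by auto
    qed
  qed (auto simp: sample_chains_def)
  then show ?case by simp
next
  case (Suc j)
  let ?extend = "\<lambda>(t, z). t(Suc j := z)"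
  let ?S = "Sigma (sample_chains x K j) (\<lambda>t. gball E (t j) K)"
  have sub: "sample_chains x K (Suc j) \<subseteq> ?extend ` ?S"
  proof
    fix t' assume t': "t' \<in> sample_chains x K (Suc j)"
    define t where "t = t'(Suc j := x)"
    have "t \<in> sample_chains x K j" using t' unfolding sample_chains_def t_def by (auto simp: less_Suc_eq)
    moreover have "t' (Suc j) \<in> gball E (t j) K"
      using t' unfolding sample_chains_def t_def gball_def by auto
    moreover have "t' = ?extend (t, t' (Suc j))" unfolding t_def by auto
    ultimately show "t' \<in> ?extend ` ?S" by blast
  qed
  have fin: "finite ?S" using Suc finite_gball by auto
  have "card ?S = (\<Sum>t\<in>sample_chains x K j. card (gball E (t j) K))"
    using Suc finite_gball by simp
  also have "\<dots> = (\<Sum>t\<in>sample_chains x K j. card (gball E x K))"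
    by (rule sum.cong) (auto intro: card_gball_eq)
  also have "\<dots> = card (sample_chains x K j) * card (gball E x K)" by simp
  also have "\<dots> \<le> card (gball E x K) ^ Suc j" using Suc by simp
  finally have "card ?S \<le> card (gball E x K) ^ Suc j" .
  moreover have "card (sample_chains x K (Suc j)) \<le> card ?S"
    using sub fin by (meson card_image_le card_mono finite_imageI le_trans)
  ultimately show ?case using sub fin by (meson finite_imageI finite_subset le_trans)
qed

lemma card_separated_le:
  assumes k: "k \<ge> 1" and \<delta>: "\<delta> \<ge> 0"
    and R: "2 * real (k - 1) * \<delta> \<le> R" and K: "real k * \<delta> < real K + 1"
    and S: "S \<subseteq> delta_paths E n \<delta> x" "separated E R S"
  shows "card S \<le> card (gball E x K) ^ (n div k)"
proof -
  define j where "j = n div k"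
  define sample where "sample p = (\<lambda>i. if i \<le> j then p!(i*k) else x)" for p :: "'a list"
  have "sample ` S \<subseteq> sample_chains x K j"
  proof
    fix t assume "t \<in> sample ` S"
    then obtain p where p: "p \<in> delta_paths E n \<delta> x" "t = sample p" using S by auto
    have "gdist E (t i) (t (Suc i)) \<le> K" if i: "i < j" for i
    proof -
      have "Suc i * k \<le> j * k" using i by (intro mult_le_mono1) simp
      also have "\<dots> \<le> n" unfolding j_def by (simp add: div_times_less_eq_dividend)
      finally have "real (gdist E (p!(i*k)) (p!(Suc i*k))) \<le> real (Suc i * k - i * k) * \<delta>"
        by (intro gdist_delta_path_le[OF p(1)]) simp_all
      also have "\<dots> = real k * \<delta>" by simp
      finally show ?thesis using K i p(2) unfolding sample_def by auto
    qed
    moreover have "t 0 = x" using p unfolding sample_def delta_paths_def by auto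
    ultimately show "t \<in> sample_chains x K j" using p(2) unfolding sample_chains_def sample_def by auto
  qed
  moreover have "inj_on sample S"
  proof (rule inj_onI, rule ccontr)
    fix p q assume p: "p \<in> S" and q: "q \<in> S" and eq: "sample p = sample q" and "p \<noteq> q"
    then have "path_dist E p q > R" using S(2) unfolding separated_def by auto
    moreover have "p ! (c * k) = q ! (c * k)" if "c * k \<le> n" for c
    proof -
      have "c \<le> j" unfolding j_def using that k by (simp add: less_eq_div_iff_mult_less_eq)
      then show ?thesis using fun_cong[OF eq, of c] unfolding sample_def by simp
    qed
    ultimately show False
      using path_dist_le_if_samples_agree[OF _ _ k \<delta> R] p q S(1) by force
  qed
  ultimately have "card S \<le> card (sample_chains x K j)"
    using sample_chains_finite_card_le by (metis card_image card_mono)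
  also have "\<dots> \<le> card (gball E x K) ^ j" using sample_chains_finite_card_le by simp
  finally show ?thesis unfolding j_def .
qed

lemma limsup_growth_term_le:
  assumes k: "k \<ge> 1" and \<delta>: "\<delta> \<ge> 0"
    and R: "2 * real (k - 1) * \<delta> \<le> R" and K: "real k * \<delta> < real K + 1"
  shows "limsup (\<lambda>n. growth_term E n R \<delta> x) \<le> ereal (ln (card (gball E x K)) / real k)"
proof (rule Limsup_bounded, rule always_eventually, rule allI)
  fix n
  define b where "b = card (gball E x K)"
  have b: "ln (real b) \<ge> 0" using card_gball_ge_1 unfolding b_def by simp
  have "sep_count E n R \<delta> x \<le> ereal (real (b ^ (n div k)))"
    unfolding sep_count_def b_def
    by (rule Sup_least) (use card_separated_le[OF k \<delta> R K] in fastforce)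
  then have "growth_term E n R \<delta> x \<le> ereal (ln (real (b ^ (n div k))) / real n)"
    by (rule growth_term_le[OF \<delta>])
  also have "ln (real (b ^ (n div k))) / real n \<le> ln (real b) / real k"
  proof (cases "n = 0")
    case False
    have "real (n div k) * real k \<le> real n"
      by (metis div_times_less_eq_dividend of_nat_mono of_nat_mult)
    then have "real (n div k) / real n \<le> 1 / real k" using False k by (simp add: field_simps)
    then have "ln (real b) * (real (n div k) / real n) \<le> ln (real b) * (1 / real k)"
      using b by (rule mult_left_mono)
    moreover have "ln (real (b ^ (n div k))) = real (n div k) * ln (real b)"
      using card_gball_ge_1 unfolding b_def by (simp add: ln_realpow)
    ultimately show ?thesis by (simp add: mult.commute)
  qed (use b in simp)
  finally show "growth_term E n R \<delta> x \<le> ereal (ln (card (gball E x K)) / real k)"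
    unfolding b_def by simp
qed

lemma limsup_growth_term_le_ball_rate:
  assumes \<delta>: "\<delta> \<ge> 1" and k: "k \<ge> 1" and R: "2 * real (k - 1) * \<delta> \<le> R"
  defines "K \<equiv> nat \<lfloor>real k * \<delta>\<rfloor>"
  shows "limsup (\<lambda>n. growth_term E n R \<delta> x) \<le> ereal (\<delta> * (ln (real (card (gball E x K))) / real K))"
proof -
  have kK: "real k * \<delta> < real K + 1" "real K \<le> real k * \<delta>"
    unfolding K_def using \<delta> by (simp_all add: of_nat_nat)
  have "1 * 1 \<le> real k * \<delta>" using k \<delta> by (intro mult_mono) simp_all
  then have "K \<ge> 1" unfolding K_def by linarith
  then have "ln (card (gball E x K)) / real k = ln (card (gball E x K)) / real K * (real K / real k)"
    by simp
  also have "\<dots> \<le> ln (card (gball E x K)) / real K * \<delta>"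
    using kK(2) k card_gball_ge_1[of x K] by (intro mult_left_mono) (simp_all add: field_simps)
  finally have "ereal (ln (card (gball E x K)) / real k) \<le> ereal (\<delta> * (ln (card (gball E x K)) / real K))"
    by (simp add: mult.commute)
  moreover have "limsup (\<lambda>n. growth_term E n R \<delta> x) \<le> ereal (ln (card (gball E x K)) / real k)"
    using \<delta> by (intro limsup_growth_term_le[OF k _ R kK(1)]) simp
  ultimately show ?thesis by (rule order_trans[rotated])
qed

lemma limsup_growth_term_tendsto_0:
  assumes h: "(\<lambda>l::nat. ln (real (card (gball E x l))) / real l) \<longlonglongrightarrow> 0"
    and \<delta>: "\<delta> \<ge> 1"
  shows "((\<lambda>R. limsup (\<lambda>n. growth_term E n R \<delta> x)) \<longlongrightarrow> 0) at_top"
proof -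
  define rate where "rate l = ln (real (card (gball E x l))) / real l" for l
  define k where "k R = nat \<lfloor>R / (2 * \<delta>)\<rfloor> + 1" for R :: real
  define K where "K R = nat \<lfloor>real (k R) * \<delta>\<rfloor>" for R
  have upper: "limsup (\<lambda>n. growth_term E n R \<delta> x) \<le> ereal (\<delta> * rate (K R))" if "R \<ge> 0" for R
  proof -
    have "real (k R - 1) \<le> R / (2 * \<delta>)" unfolding k_def using that \<delta> by simp
    then have "2 * real (k R - 1) * \<delta> \<le> R" using \<delta> by (simp add: field_simps)
    moreover have "k R \<ge> 1" unfolding k_def by simp
    ultimately show ?thesis
      unfolding rate_def K_def using limsup_growth_term_le_ball_rate[OF \<delta>] by blast
  qed
  have "filterlim K at_top at_top"
    unfolding filterlim_at_top
  proof
    fix Z :: nat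
    show "eventually (\<lambda>R. K R \<ge> Z) at_top"
      using eventually_ge_at_top[of "2 * \<delta> * real Z"]
    proof (rule eventually_mono)
      fix R assume "R \<ge> 2 * \<delta> * real Z"
      then have "R / (2 * \<delta>) \<ge> real Z" using \<delta> by (simp add: field_simps)
      then have "real (k R) \<ge> real Z" unfolding k_def by linarith
      moreover have "real (k R) * 1 \<le> real (k R) * \<delta>" using \<delta> by (intro mult_left_mono) auto
      ultimately show "K R \<ge> Z" unfolding K_def by linarith
    qed
  qed
  with h have "((\<lambda>R. rate (K R)) \<longlongrightarrow> 0) at_top"
    unfolding rate_def by (rule filterlim_compose)
  then have "((\<lambda>R. ereal (\<delta> * rate (K R))) \<longlongrightarrow> 0) at_top"
    unfolding zero_ereal_def by (intro tendsto_ereal tendsto_mult_right_zero)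
  then show ?thesis
  proof (rule tendsto_sandwich[OF _ _ tendsto_const, rotated 2])
    show "\<forall>\<^sub>F R in at_top. 0 \<le> limsup (\<lambda>n. growth_term E n R \<delta> x)"
      by (intro always_eventually allI le_Limsup) (use \<delta> growth_term_nonneg in auto)
    show "\<forall>\<^sub>F R in at_top. limsup (\<lambda>n. growth_term E n R \<delta> x) \<le> ereal (\<delta> * rate (K R))"
      using eventually_ge_at_top[of "0::real"] by eventually_elim (rule upper)
  qed
qed

lemma coarse_entropy_eq_0:
  assumes "(\<lambda>l::nat. ln (real (card (gball E x l))) / real l) \<longlonglongrightarrow> 0"
  shows "coarse_entropy E x = 0"
proof -
  have "Lim at_top (\<lambda>R. limsup (\<lambda>n. growth_term E n R \<delta> x)) = 0" if "\<delta> \<ge> 1" for \<delta>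
    using limsup_growth_term_tendsto_0[OF assms that] by (intro tendsto_Lim) simp_all
  then have "\<forall>\<^sub>F \<delta> in at_top. Lim at_top (\<lambda>R. limsup (\<lambda>n. growth_term E n R \<delta> x)) = 0"
    unfolding eventually_at_top_linorder by blast
  then show ?thesis unfolding coarse_entropy_def
    by (intro tendsto_Lim tendsto_eventually) simp_all
qed

lemma exists_separated_subset:
  assumes "finite A"
  shows "\<exists>T\<subseteq>A. vertex_separated r T \<and> card A \<le> card T * card (gball E x r)"
  using assms
proof (induction A rule: finite_psubset_induct)
  case (psubset A)
  show ?case
  proof (cases "A = {}")
    case True then show ?thesis by (auto simp: vertex_separated_def)
  next
    case False
    then obtain a where a: "a \<in> A" by auto
    define A' where "A' = A - gball E a r"
    have "a \<notin> A'" unfolding A'_def gball_def by simp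
    then have "A' \<subset> A" using a unfolding A'_def by auto
    then obtain T' where T': "T' \<subseteq> A'" "vertex_separated r T'"
      "card A' \<le> card T' * card (gball E x r)"
      using psubset.IH by blast
    have far: "r < gdist E a t" "r < gdist E t a" if "t \<in> T'" for t
      using that T'(1) gdist_commute unfolding A'_def gball_def by auto
    have aT': "a \<notin> T'" using T'(1) \<open>a \<notin> A'\<close> by auto
    have "finite T'" using T'(1) psubset.hyps unfolding A'_def by (auto intro: finite_subset)
    have "card A \<le> card (A \<inter> gball E a r) + card A'"
      unfolding A'_def using psubset.hyps by (metis Diff_Diff_Int card_Diff_subset_Int card_Int_Diff finite_Diff le_refl)
    also have "card (A \<inter> gball E a r) \<le> card (gball E x r)"
      using card_mono[OF finite_gball, of "A \<inter> gball E a r" a r] card_gball_eq[of a r x] by auto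
    finally have "card A \<le> card (insert a T') * card (gball E x r)"
      using T'(3) aT' \<open>finite T'\<close> by simp
    moreover have "vertex_separated r (insert a T')"
      using T'(2) far unfolding vertex_separated_def by auto
    moreover have "insert a T' \<subseteq> A" using T'(1) a unfolding A'_def by auto
    ultimately show ?thesis by blast
  qed
qed

lemma sep_count_ge_ratio_power:
  assumes d: "real d \<le> \<delta>" and r: "R \<le> real r"
  shows "sep_count E (j * k) R \<delta> x \<ge>
     ereal ((real (card (gball E x (k * d))) / real (card (gball E x r))) ^ j)"
proof -
  define M where "M = real (card (gball E x (k * d))) / real (card (gball E x r))"
  have "\<forall>y. \<exists>T\<subseteq>gball E y (k * d). vertex_separated r T \<and>
      card (gball E y (k * d)) \<le> card T * card (gball E x r)"
    using exists_separated_subset[OF finite_gball] by blast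
  then obtain T where T: "\<And>y. T y \<subseteq> gball E y (k * d)" "\<And>y. vertex_separated r (T y)"
    "\<And>y. card (gball E y (k * d)) \<le> card (T y) * card (gball E x r)"
    by metis
  have M: "real (card (T y)) \<ge> M" "M \<ge> 0" for y
  proof -
    have "real (card (gball E x (k * d))) \<le> real (card (T y)) * real (card (gball E x r))"
      using T(3)[of y] card_gball_eq[of y "k * d" x] by (metis of_nat_mono of_nat_mult)
    then show "real (card (T y)) \<ge> M"
      unfolding M_def using card_gball_ge_1[of x r] by (simp add: field_simps)
  qed (simp add: M_def)
  then have F: "finite (branching_walks T d k x j)" "M ^ j \<le> real (card (branching_walks T d k x j))"
    using branching_walks_card[OF T(1,2) M, of x j] by auto
  have "ereal (real (card (branching_walks T d k x j))) \<le> sep_count E (j * k) R \<delta> x"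
  proof (rule sep_count_ge_card[OF F(1) branching_walks_separated[OF T(1,2)] r])
    fix f i assume "f \<in> branching_walks T d k x j" "i < j * k"
    then show "real (gdist E (f i) (f (Suc i))) \<le> \<delta>"
      using branching_walks_start_step d by (meson of_nat_le_iff order_trans)
  qed (use branching_walks_start_step in blast)
  with F(2) show ?thesis unfolding M_def by (meson ereal_less_eq(3) order_trans)
qed

lemma limsup_growth_term_ge:
  assumes k: "k \<ge> 1" and d: "real d \<le> \<delta>" and r: "R \<le> real r"
  shows "limsup (\<lambda>n. growth_term E n R \<delta> x) \<ge>
    ereal (ln (real (card (gball E x (k * d))) / real (card (gball E x r))) / real k)"
proof -
  define M where "M = real (card (gball E x (k * d))) / real (card (gball E x r))"
  have M: "M > 0"
    unfolding M_def using card_gball_ge_1[of x "k * d"] card_gball_ge_1[of x r]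
    by (intro divide_pos_pos) simp_all
  have \<delta>: "\<delta> \<ge> 0" using d by simp
  have "ereal (ln M / real k) \<le> growth_term E (Suc j * k) R \<delta> x" for j
  proof -
    have "ereal (M ^ Suc j) \<le> sep_count E (Suc j * k) R \<delta> x"
      unfolding M_def by (rule sep_count_ge_ratio_power[OF d r])
    then have "ereal (ln (M ^ Suc j) / real (Suc j * k)) \<le> growth_term E (Suc j * k) R \<delta> x"
      by (rule growth_term_ge[OF \<delta>]) (use M in simp)
    moreover have "ln (M ^ Suc j) / real (Suc j * k) = (real (Suc j) * ln M) / (real (Suc j) * real k)"
      by (simp only: ln_realpow of_nat_mult)
    moreover have "\<dots> = ln M / real k" by (rule mult_divide_mult_cancel_left) simp
    ultimately show ?thesis by simp
  qed
  then have "ereal (ln M / real k) \<le> limsup (\<lambda>j. growth_term E (Suc j * k) R \<delta> x)"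
    by (intro le_Limsup always_eventually allI) simp_all
  also have "\<dots> \<le> limsup (\<lambda>n. growth_term E n R \<delta> x)"
    using limsup_subseq_mono[of "\<lambda>j. Suc j * k"] k by (simp add: strict_mono_def comp_def)
  finally show ?thesis unfolding M_def .
qed

lemma limsup_growth_term_ge_floor:
  assumes c: "c > 0" and \<delta>: "\<delta> \<ge> 1"
    and freq: "frequently (\<lambda>l. c < ln (real (card (gball E x l))) / real l) sequentially"
  shows "limsup (\<lambda>n. growth_term E n R \<delta> x) \<ge> ereal (c * real (nat \<lfloor>\<delta>\<rfloor>) / 4)"
proof -
  have d: "nat \<lfloor>\<delta>\<rfloor> \<ge> 1" "real (nat \<lfloor>\<delta>\<rfloor>) \<le> \<delta>" using \<delta> by linarith+
  have r: "R \<le> real (nat \<lceil>R\<rceil>)" by linarith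
  obtain k where "k \<ge> 1" and k: "c * real (nat \<lfloor>\<delta>\<rfloor>) / 4 \<le>
      ln (real (card (gball E x (k * nat \<lfloor>\<delta>\<rfloor>))) / real (card (gball E x (nat \<lceil>R\<rceil>)))) / real k"
    using exists_scale_large_ball_ratio[OF c d(1) freq] by blast
  with limsup_growth_term_ge[OF \<open>k \<ge> 1\<close> d(2) r] show ?thesis by (meson ereal_less_eq(3) order_trans)
qed

lemma coarse_entropy_eq_PInf:
  assumes "limsup (\<lambda>l::nat. ereal (ln (real (card (gball E x l))) / real l)) > 0"
  shows "coarse_entropy E x = \<infinity>"
proof -
  define G where "G \<delta> = Lim at_top (\<lambda>R::real. limsup (\<lambda>n. growth_term E n R \<delta> x))" for \<delta>
  obtain c where c: "0 < c" "ereal c < limsup (\<lambda>l::nat. ereal (ln (real (card (gball E x l))) / real l))"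
    using ereal_dense2[OF assms] by auto
  have freq: "frequently (\<lambda>l. c < ln (real (card (gball E x l))) / real l) sequentially"
  proof (rule ccontr)
    assume "\<not> ?thesis"
    then have "limsup (\<lambda>l::nat. ereal (ln (real (card (gball E x l))) / real l)) \<le> ereal c"
      unfolding not_frequently by (intro Limsup_bounded) (auto elim: eventually_mono)
    with c(2) show False by simp
  qed
  have G: "G \<delta> \<ge> ereal (c * real (nat \<lfloor>\<delta>\<rfloor>) / 4)" if \<delta>: "\<delta> \<ge> 1" for \<delta>
  proof -
    have "antimono (\<lambda>R. limsup (\<lambda>n. growth_term E n R \<delta> x))"
      using \<delta> by (intro antimonoI Limsup_mono always_eventually allI growth_term_antimono) simp_all
    then have "G \<delta> = (INF R. limsup (\<lambda>n. growth_term E n R \<delta> x))"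
      unfolding G_def by (intro tendsto_Lim antimono_tendsto_INF_at_top) simp_all
    then show ?thesis using limsup_growth_term_ge_floor[OF c(1) \<delta> freq] by (simp add: le_INF_iff)
  qed
  have "(G \<longlongrightarrow> \<infinity>) at_top"
    unfolding tendsto_PInfty
  proof
    fix a :: real
    show "\<forall>\<^sub>F \<delta> in at_top. ereal a < G \<delta>"
      using eventually_ge_at_top[of "max 1 (4 * \<bar>a\<bar> / c + 2)"]
    proof (rule eventually_mono)
      fix \<delta> assume \<delta>: "max 1 (4 * \<bar>a\<bar> / c + 2) \<le> \<delta>"
      then have "4 * \<bar>a\<bar> / c < real (nat \<lfloor>\<delta>\<rfloor>)" by linarith
      then have "a < c * real (nat \<lfloor>\<delta>\<rfloor>) / 4" using c(1) by (simp add: field_simps)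
      then have "ereal a < ereal (c * real (nat \<lfloor>\<delta>\<rfloor>) / 4)" by simp
      also have "\<dots> \<le> G \<delta>" using G \<delta> by simp
      finally show "ereal a < G \<delta>" .
    qed
  qed
  then show ?thesis unfolding coarse_entropy_def G_def[symmetric] by (intro tendsto_Lim) simp_all
qed

end

theorem mainTheorem17:
  fixes E :: "'a \<Rightarrow> 'a \<Rightarrow> bool" and x :: 'a
  assumes sym: "\<And>a b. E a b \<longleftrightarrow> E b a"
    and conn: "graph_connected E"
    and vt: "vertex_transitive E"
    and lf: "locally_finite E"
  shows "((\<lambda>l::nat. ln (real (card (gball E x l))) / real l) \<longlonglongrightarrow> 0
            \<longrightarrow> coarse_entropy E x = 0)
       \<and> (limsup (\<lambda>l::nat. ereal (ln (real (card (gball E x l))) / real l)) > 0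
            \<longrightarrow> coarse_entropy E x = \<infinity>)"
proof -
  interpret vertex_transitive_graph E
    using sym conn vt lf by unfold_locales
  show ?thesis using coarse_entropy_eq_0 coarse_entropy_eq_PInf by blast
qed

end
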